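(* Let $c,d$ be positive integers and define $\phi_{c,d}:\mathbb Z_{>0}^2\to\mathbb Z_{>0}^2$ by $\phi_{c,d}(s,t)=(c,d)$ if $s=t$, $(s-t,d)$ if $s>t$, and $(c,t-s)$ if $s<t$. Let $(c_1,d_1)=(c,d)$ and $(c_{k+1},d_{k+1})=\phi_{c,d}(c_k,d_k)$ for $k\ge1$. Put $e=c/\gcd(c,d)$, $e'=d/\gcd(c,d)$ and $p=e+e'-1$. Then $(c_{k+p},d_{k+p})=(c_k,d_k)$ for all $k\ge1$. Moreover, for arbitrary integers $\tilde c,\tilde d$, define for $k\ge2$: $\mu_k=\min\{c_k,d_k\}$ and $\nu_k=\tilde c+\tilde d$ if $c_k=d_k$, $\nu_k=\tilde d$ if $c_k>d_k$, $\nu_k=\tilde c$ if $c_k<d_k$. Then $$\sum_{k=2}^{p+1}\mu_k=\mathrm{lcm}(c,d),\qquad \sum_{k=2}^{p+1}\nu_k=e\tilde d+e'\tilde c.$$ *)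

theory Defs
  imports Main
begin

definition phi :: "nat \<Rightarrow> nat \<Rightarrow> nat \<times> nat \<Rightarrow> nat \<times> nat" where
  "phi c d st = (let s = fst st; t = snd st in
     if s = t then (c, d) else if s > t then (s - t, d) else (c, t - s))"

definition cdseq :: "nat \<Rightarrow> nat \<Rightarrow> nat \<Rightarrow> nat \<times> nat" where
  "cdseq c d k = (phi c d ^^ (k - 1)) (c, d)"

definition mu :: "nat \<Rightarrow> nat \<Rightarrow> nat \<Rightarrow> nat" where
  "mu c d k = min (fst (cdseq c d k)) (snd (cdseq c d k))"

definition nu :: "nat \<Rightarrow> nat \<Rightarrow> int \<Rightarrow> int \<Rightarrow> nat \<Rightarrow> int" where
  "nu c d ct dt k = (let ck = fst (cdseq c d k); dk = snd (cdseq c d k) in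
     if ck = dk then ct + dt else if ck > dk then dt else ct)"

end

theory Submission
  imports Defs
begin

text \<open>
  The pair \<open>(c\<^sub>k, d\<^sub>k)\<close> is the pair of distances from a point \<open>x\<^sub>k\<close> to the next multiples
  of \<open>c\<close> and of \<open>d\<close>, starting from \<open>x\<^sub>1 = 0\<close>, and \<open>\<phi>\<^sub>c\<^sub>,\<^sub>d\<close> moves the point to the nearer
  of the two. So \<open>\<mu>\<^sub>k = x\<^sub>k - x\<^sub>k\<^sub>-\<^sub>1\<close>, and \<open>x\<^sub>2 < x\<^sub>3 < \<dots>\<close> enumerates the positive multiples
  of \<open>c\<close> or \<open>d\<close>.
  The quantity \<open>x div c + x div d\<close> grows by one at each step, and by two exactly at
  common multiples. Since \<open>(0, lcm c d]\<close> contains \<open>e'\<close> multiples of \<open>c\<close> and \<open>e\<close> of \<open>d\<close>,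
  the walk from \<open>0\<close> reaches \<open>lcm c d\<close> after \<open>p = e + e' - 1\<close> steps; the distances repeat
  from there on, and the sums of \<open>\<mu>\<close> and \<open>\<nu>\<close> over one period telescope to the growth of
  \<open>x\<close>, of \<open>x div c\<close> and of \<open>x div d\<close> over one \<open>lcm c d\<close>.
\<close>

lemma add_gap_eq_next_multiple:
  fixes k x :: nat
  assumes "k > 0"
  shows "x + (k - x mod k) = (x div k + 1) * k"
proof -
  have "x = x div k * k + x mod k" by simp
  moreover have "x mod k < k" using assms by simp
  moreover have "(x div k + 1) * k = x div k * k + k" by simp
  ultimately show ?thesis by linarith
qed

lemma add_below_gap:
  fixes k x m :: nat
  assumes "m < k - x mod k"
  shows "(x + m) mod k = x mod k + m" and "(x + m) div k = x div k"
proof -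
  have small: "x mod k + m < k" using assms by auto
  have split: "x + m = (x mod k + m) + x div k * k" by simp
  have "(x mod k + m + x div k * k) mod k = x mod k + m"
    by (simp only: mod_mult_self1 mod_less[OF small])
  then show "(x + m) mod k = x mod k + m" by (simp only: split)
  have "k > 0" using small by simp
  then have "(x mod k + m + x div k * k) div k = x div k"
    by (simp only: div_mult_self1 div_less[OF small] neq0_conv add_0_right)
  then show "(x + m) div k = x div k" by (simp only: split)
qed

lemma div_add_min_gap:
  fixes k x u :: nat
  assumes "k > 0"
  shows "(x + min (k - x mod k) u) div k = x div k + (if k - x mod k \<le> u then 1 else 0)"
  using add_gap_eq_next_multiple[OF assms, of x] add_below_gap(2)[of u k x] assms
  by (auto simp: min_def)

lemma dvd_add_min_gap_iff:
  fixes k x u :: nat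
  assumes "k > 0" "u > 0"
  shows "k dvd x + min (k - x mod k) u \<longleftrightarrow> k - x mod k \<le> u"
  using add_gap_eq_next_multiple[OF assms(1), of x] add_below_gap(1)[of u k x] assms
  by (auto simp: min_def dvd_eq_mod_eq_0)

lemma sum_telescope_from_two:
  fixes f g :: "nat \<Rightarrow> 'a::ab_group_add"
  assumes "\<And>j. g (Suc j) = f (Suc j) - f j"
  shows "(\<Sum>k = 2..n + 1. g k) = f (n + 1) - f 1"
proof -
  have "{2..n + 1} = {Suc 1..Suc n}" by simp
  then have "(\<Sum>k = 2..n + 1. g k) = (\<Sum>j = 1..n. f (Suc j) - f j)"
    by (simp only: sum.shift_bounds_cl_Suc_ivl assms)
  also have "\<dots> = f (n + 1) - f 1" by (simp add: sum_Suc_diff)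
  finally show ?thesis .
qed

lemma lcm_eq_div_gcd_mult:
  fixes c d :: nat
  shows "lcm c d = d div gcd c d * c" and "lcm c d = c div gcd c d * d"
  by (simp_all add: lcm_nat_def div_mult_swap mult.commute)

definition gaps :: "nat \<Rightarrow> nat \<Rightarrow> nat \<Rightarrow> nat \<times> nat" where
  "gaps c d x = (c - x mod c, d - x mod d)"

fun walk :: "nat \<Rightarrow> nat \<Rightarrow> nat \<Rightarrow> nat" where
  "walk c d 0 = 0"
| "walk c d (Suc n) = walk c d n + min (c - walk c d n mod c) (d - walk c d n mod d)"

declare walk.simps(2) [simp del]

lemma phi_gaps:
  assumes "c > 0" "d > 0"
  shows "phi c d (gaps c d x) = gaps c d (x + min (c - x mod c) (d - x mod d))"
proof -
  define s t where "s = c - x mod c" and "t = d - x mod d"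
  have next_c: "(x + s) mod c = 0" and next_d: "(x + t) mod d = 0"
    using add_gap_eq_next_multiple assms by (simp_all add: s_def t_def)
  have gaps: "gaps c d x = (s, t)" by (simp add: gaps_def s_def t_def)
  consider "s = t" | "t < s" | "s < t" by linarith
  then show ?thesis
  proof cases
    case 1
    then show ?thesis using next_c next_d gaps by (simp add: phi_def gaps_def flip: s_def t_def)
  next
    case 2
    then have "(x + t) mod c = x mod c + t" using add_below_gap(1) by (simp add: s_def)
    then show ?thesis using 2 next_d gaps
      by (simp add: phi_def gaps_def flip: s_def t_def) (simp add: s_def)
  next
    case 3
    then have "(x + s) mod d = x mod d + s" using add_below_gap(1) by (simp add: t_def)
    then show ?thesis using 3 next_c gaps
      by (simp add: phi_def gaps_def flip: s_def t_def) (simp add: t_def)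
  qed
qed

lemma cdseq_Suc_eq_gaps_walk:
  assumes "c > 0" "d > 0"
  shows "cdseq c d (Suc n) = gaps c d (walk c d n)"
proof (induction n)
  case 0
  then show ?case by (simp add: cdseq_def gaps_def)
next
  case (Suc n)
  then show ?case by (simp add: cdseq_def walk.simps(2) phi_gaps[OF assms])
qed

lemma gaps_add_lcm: "gaps c d (x + lcm c d) = gaps c d x"
  by (simp add: gaps_def mod_add_right_eq [symmetric, of x])

abbreviation period :: "nat \<Rightarrow> nat \<Rightarrow> nat" where
  "period c d \<equiv> c div gcd c d + d div gcd c d - 1"

context
  fixes c d :: nat
  assumes c_pos: "c > 0" and d_pos: "d > 0"
begin

lemma walk_Suc_div:
  "walk c d (Suc n) div c
     = walk c d n div c + (if c - walk c d n mod c \<le> d - walk c d n mod d then 1 else 0)"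
  "walk c d (Suc n) div d
     = walk c d n div d + (if d - walk c d n mod d \<le> c - walk c d n mod c then 1 else 0)"
  using div_add_min_gap[OF c_pos, of "walk c d n" "d - walk c d n mod d"]
    div_add_min_gap[OF d_pos, of "walk c d n" "c - walk c d n mod c"]
  by (simp_all add: walk.simps(2) min.commute)

lemma lcm_dvd_walk_Suc_iff:
  "lcm c d dvd walk c d (Suc n) \<longleftrightarrow> c - walk c d n mod c = d - walk c d n mod d"
proof -
  define x s t where "x = walk c d n" and "s = c - x mod c" and "t = d - x mod d"
  have "s > 0" "t > 0" using c_pos d_pos by (auto simp: s_def t_def)
  then have "c dvd x + min s t \<longleftrightarrow> s \<le> t" and "d dvd x + min s t \<longleftrightarrow> t \<le> s"
    using dvd_add_min_gap_iff[OF c_pos, of t x] dvd_add_min_gap_iff[OF d_pos, of s x]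
    by (simp_all add: s_def t_def min.commute)
  moreover have "walk c d (Suc n) = x + min s t" by (simp add: walk.simps(2) x_def s_def t_def)
  ultimately show ?thesis by (auto simp: x_def s_def t_def)
qed

lemma walk_Suc_div_add_div:
  "walk c d (Suc n) div c + walk c d (Suc n) div d
     = walk c d n div c + walk c d n div d + (if lcm c d dvd walk c d (Suc n) then 2 else 1)"
  using walk_Suc_div lcm_dvd_walk_Suc_iff by auto

lemma walk_Suc_le_lcm:
  assumes "walk c d n < lcm c d"
  shows "walk c d (Suc n) \<le> lcm c d"
proof -
  have "walk c d n div c < d div gcd c d"
    using assms c_pos by (simp add: lcm_eq_div_gcd_mult(1) div_less_iff_less_mult)
  then have "(walk c d n div c + 1) * c \<le> lcm c d"
    by (simp add: lcm_eq_div_gcd_mult(1) del: mult_Suc)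
  moreover have "walk c d (Suc n) \<le> walk c d n + (c - walk c d n mod c)"
    by (simp add: walk.simps(2))
  ultimately show ?thesis using add_gap_eq_next_multiple[OF c_pos] by simp
qed

lemma div_add_div_lt_lcm:
  assumes "y < lcm c d"
  shows "y div c + y div d + 2 \<le> c div gcd c d + d div gcd c d"
proof -
  have "y div c < d div gcd c d" "y div d < c div gcd c d"
    using assms c_pos d_pos lcm_eq_div_gcd_mult by (metis div_less_iff_less_mult)+
  then show ?thesis by simp
qed

lemma lcm_div_add_lcm_div: "lcm c d div c + lcm c d div d = c div gcd c d + d div gcd c d"
  using c_pos d_pos lcm_eq_div_gcd_mult by (metis add.commute nonzero_mult_div_cancel_right
      less_numeral_extra(3))

lemma walk_Suc_div_add_div_lt_lcm:
  assumes "walk c d (Suc n) < lcm c d"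
  shows "walk c d (Suc n) div c + walk c d (Suc n) div d = walk c d n div c + walk c d n div d + 1"
proof -
  have "walk c d (Suc n) > 0"
    using c_pos d_pos by (simp add: walk.simps(2))
  then have "\<not> lcm c d dvd walk c d (Suc n)"
    using assms nat_dvd_not_less by blast
  then show ?thesis using walk_Suc_div_add_div[of n] by (simp only: if_False)
qed

lemma walk_before_period:
  assumes "n < period c d"
  shows "walk c d n < lcm c d \<and> walk c d n div c + walk c d n div d = n"
  using assms
proof (induction n)
  case 0
  then show ?case using c_pos d_pos by (simp add: lcm_pos_nat)
next
  case (Suc n)
  then have below: "walk c d n < lcm c d" and count: "walk c d n div c + walk c d n div d = n"
    by auto
  have "walk c d (Suc n) \<noteq> lcm c d"
    using walk_Suc_div_add_div[of n] lcm_div_add_lcm_div count Suc.prems by auto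
  then have "walk c d (Suc n) < lcm c d"
    using walk_Suc_le_lcm[OF below] by simp
  then show ?case
    using walk_Suc_div_add_div_lt_lcm count by simp
qed

lemma walk_period: "walk c d (period c d) = lcm c d"
proof -
  define n where "n = c div gcd c d + d div gcd c d - 2"
  have "c div gcd c d > 0" "d div gcd c d > 0"
    using c_pos d_pos by (simp_all add: div_greater_zero_iff)
  then have Suc_n: "Suc n = period c d"
    and "n < period c d" by (simp_all add: n_def)
  then have below: "walk c d n < lcm c d" and count: "walk c d n div c + walk c d n div d = n"
    using walk_before_period by auto
  have "\<not> walk c d (Suc n) < lcm c d"
  proof
    assume "walk c d (Suc n) < lcm c d"
    then have "n + 3 \<le> c div gcd c d + d div gcd c d"
      using div_add_div_lt_lcm walk_Suc_div_add_div_lt_lcm count by fastforce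
    then show False using Suc_n by simp
  qed
  with walk_Suc_le_lcm[OF below] Suc_n show ?thesis by simp
qed

lemma walk_add_period:
  "walk c d (n + period c d) = walk c d n + lcm c d"
proof (induction n)
  case 0
  then show ?case using walk_period by simp
next
  case (Suc n)
  then show ?case
    using gaps_add_lcm[of c d "walk c d n"] by (simp add: walk.simps(2) gaps_def)
qed

lemma walk_Suc_eq_add_mu: "walk c d (Suc n) = walk c d n + mu c d (Suc n)"
  by (simp add: mu_def cdseq_Suc_eq_gaps_walk[OF c_pos d_pos] gaps_def walk.simps(2))

lemma nu_Suc:
  "nu c d ct dt (Suc n)
     = (ct * int (walk c d (Suc n) div c) + dt * int (walk c d (Suc n) div d))
     - (ct * int (walk c d n div c) + dt * int (walk c d n div d))"
  by (simp add: nu_def cdseq_Suc_eq_gaps_walk[OF c_pos d_pos] gaps_def Let_def walk_Suc_div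
      algebra_simps)

lemma cdseq_add_period:
  assumes "k \<ge> 1"
  shows "cdseq c d (k + period c d) = cdseq c d k"
proof -
  obtain j where "k = Suc j" using assms by (cases k) auto
  then show ?thesis
    using cdseq_Suc_eq_gaps_walk[OF c_pos d_pos] walk_add_period gaps_add_lcm by simp
qed

lemma walk_Suc_period: "walk c d (period c d + 1) = walk c d 1 + lcm c d"
  using walk_add_period[of 1] by (simp add: add.commute)

lemma sum_mu_period: "(\<Sum>k = 2..period c d + 1. mu c d k) = lcm c d"
proof -
  have "int (\<Sum>k = 2..period c d + 1. mu c d k)
      = int (walk c d (period c d + 1)) - int (walk c d 1)"
    unfolding of_nat_sum by (rule sum_telescope_from_two) (simp add: walk_Suc_eq_add_mu)
  then have "int (\<Sum>k = 2..period c d + 1. mu c d k) = int (lcm c d)"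
    unfolding walk_Suc_period of_nat_add by linarith
  then show ?thesis by (simp only: of_nat_eq_iff)
qed

lemma sum_nu_period:
  "(\<Sum>k = 2..period c d + 1. nu c d ct dt k)
     = int (c div gcd c d) * dt + int (d div gcd c d) * ct"
proof -
  let ?x = "walk c d (period c d + 1)" and ?x\<^sub>1 = "walk c d 1"
  have "(\<Sum>k = 2..period c d + 1. nu c d ct dt k)
      = (ct * int (?x div c) + dt * int (?x div d)) - (ct * int (?x\<^sub>1 div c) + dt * int (?x\<^sub>1 div d))"
    by (rule sum_telescope_from_two) (rule nu_Suc)
  moreover have "?x div c = ?x\<^sub>1 div c + d div gcd c d"
    unfolding walk_Suc_period using c_pos
    by (simp add: div_plus_div_distrib_dvd_right lcm_eq_div_gcd_mult(1))
  moreover have "?x div d = ?x\<^sub>1 div d + c div gcd c d"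
    unfolding walk_Suc_period using d_pos
    by (simp add: div_plus_div_distrib_dvd_right lcm_eq_div_gcd_mult(2))
  ultimately show ?thesis by (simp add: algebra_simps)
qed

end

theorem mainTheorem4:
  fixes c d :: nat
  assumes "c > 0" and "d > 0"
  defines "e \<equiv> c div gcd c d" and "e' \<equiv> d div gcd c d"
  defines "p \<equiv> e + e' - 1"
  shows "(\<forall>k\<ge>1. cdseq c d (k + p) = cdseq c d k)
    \<and> (\<Sum>k = 2..p + 1. mu c d k) = lcm c d
    \<and> (\<forall>ct dt :: int. (\<Sum>k = 2..p + 1. nu c d ct dt k) = int e * dt + int e' * ct)"
  using cdseq_add_period[OF assms(1,2)] sum_mu_period[OF assms(1,2)]
    sum_nu_period[OF assms(1,2)]
  unfolding e_def e'_def p_def by blast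

end
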